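(* Let $r>1$ be an integer and let $\sigma$ be a morphism on the alphabet $\{0,\dots,r-1\}$ which is non-erasing, i.e. $|\sigma(i)|\ge 1$ for all $i\in\{0,\dots,r-1\}$. Let $L=(|\sigma(0)|,\dots,|\sigma(r-1)|)$ be its length vector and $M$ its incidence matrix. Let $x$ be a one-sided infinite fixed point of $\sigma$. If $L$ is a left eigenvector of $M$ (i.e. $LM=\lambda L$ for some real $\lambda$), then $x$ is $q$-automatic, where $q$ is the spectral radius of $M$ (in particular $q$ is an integer).
   Context: A morphism $\sigma$ on a finite alphabet $\mathcal A$ extends to finite and infinite words by concatenation. Its incidence matrix $M$ is the $|\mathcal A|\times|\mathcal A|$ matrix with $M_{i,j}$ equal to the number of occurrences of the letter $i$ in $\sigma(j)$ (so column sums are the lengths $|\sigma(j)|$). A morphism is $q$-uniform if all images of letters have length $q$. For an integer $q\ge 2$, a sequence is $q$-automatic if it is the image under a letter-to-letter map of a fixed point of a $q$-uniform morphism. *)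

theory Defs
  imports Main "Jordan_Normal_Form.Spectral_Radius"
begin

definition is_morphism :: "nat \<Rightarrow> (nat \<Rightarrow> nat list) \<Rightarrow> bool" where
  "is_morphism r \<sigma> \<longleftrightarrow> (\<forall>a<r. set (\<sigma> a) \<subseteq> {..<r})"

definition non_erasing :: "nat \<Rightarrow> (nat \<Rightarrow> nat list) \<Rightarrow> bool" where
  "non_erasing r \<sigma> \<longleftrightarrow> (\<forall>a<r. length (\<sigma> a) \<ge> 1)"

definition incidence_mat :: "nat \<Rightarrow> (nat \<Rightarrow> nat list) \<Rightarrow> complex mat" where
  "incidence_mat r \<sigma> = mat r r (\<lambda>(i,j). of_nat (count_list (\<sigma> j) i))"

definition length_vec :: "nat \<Rightarrow> (nat \<Rightarrow> nat list) \<Rightarrow> complex vec" where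
  "length_vec r \<sigma> = vec r (\<lambda>j. of_nat (length (\<sigma> j)))"

(* L is a left eigenvector of M with a real eigenvalue: L M = lambda L *)
definition left_eigvec_real :: "complex vec \<Rightarrow> complex mat \<Rightarrow> bool" where
  "left_eigvec_real L M \<longleftrightarrow> (\<exists>c::real. transpose_mat M *\<^sub>v L = complex_of_real c \<cdot>\<^sub>v L)"

(* sigma(x) = x for an infinite word x :: nat => nat (sigma extended by concatenation):
   for every n, sigma(x_0 ... x_{n-1}) is a prefix of x. *)
definition is_fixed_point :: "(nat \<Rightarrow> nat list) \<Rightarrow> (nat \<Rightarrow> nat) \<Rightarrow> bool" where
  "is_fixed_point \<sigma> x \<longleftrightarrow>
     (\<forall>n. let w = concat (map \<sigma> (map x [0..<n])) in \<forall>k<length w. w ! k = x k)"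

(* one-sided infinite fixed point of sigma in the usual sense x = sigma^omega(a):
   sigma(x) = x, with x over the alphabet, and sigma(x_0) = x_0 u with u nonempty *)
definition infinite_fixed_point :: "nat \<Rightarrow> (nat \<Rightarrow> nat list) \<Rightarrow> (nat \<Rightarrow> nat) \<Rightarrow> bool" where
  "infinite_fixed_point r \<sigma> x \<longleftrightarrow>
     (\<forall>n. x n < r) \<and> is_fixed_point \<sigma> x \<and> length (\<sigma> (x 0)) \<ge> 2"

definition uniform :: "nat \<Rightarrow> nat \<Rightarrow> (nat \<Rightarrow> nat list) \<Rightarrow> bool" where
  "uniform s q \<tau> \<longleftrightarrow> (\<forall>a<s. length (\<tau> a) = q)"

(* q-automatic: image under a letter-to-letter map of a fixed point of a q-uniform
   morphism on a finite alphabet {0,...,s-1} *)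
definition automatic :: "nat \<Rightarrow> (nat \<Rightarrow> 'b) \<Rightarrow> bool" where
  "automatic q x \<longleftrightarrow> q \<ge> 2 \<and>
     (\<exists>s \<tau> y f. is_morphism s \<tau> \<and> uniform s q \<tau> \<and> (\<forall>n. y n < s) \<and>
        is_fixed_point \<tau> y \<and> (\<forall>n. x n = f (y n)))"

end

theory Submission
  imports Defs
begin

text \<open>Reading \<open>L M = \<lambda> L\<close> column by column gives \<open>|\<sigma>(\<sigma>(a))| = \<lambda> |\<sigma>(a)|\<close> for every letter \<open>a\<close>,
  so \<open>\<lambda>\<^sup>n |\<sigma>(a)| = |\<sigma>\<^sup>n\<^sup>+\<^sup>1(a)|\<close> is an integer for all \<open>n\<close>, and a rational number with this
  property is an integer \<open>q\<close>. Every letter \<open>a\<close> then carries \<open>|\<sigma>(a)|\<close> "positions", and \<open>\<sigma>\<close> maps the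
  \<open>|\<sigma>(a)|\<close> positions of \<open>\<sigma>(a)\<close> onto \<open>q |\<sigma>(a)|\<close> positions of \<open>\<sigma>(\<sigma>(a))\<close>: splitting evenly gives a
  \<open>q\<close>-uniform morphism on positions whose fixed point projects onto \<open>x\<close>. Finally, \<open>L\<close> is a positive
  left eigenvector of the nonnegative matrix \<open>M\<close>, so the \<open>L\<close>-weighted \<open>\<ell>\<^sub>1\<close>-norm shows that no
  eigenvalue exceeds \<open>q\<close> in modulus, while \<open>q\<close> itself is an eigenvalue.\<close>

section \<open>Morphisms acting on words\<close>

definition morph_img :: "(nat \<Rightarrow> nat list) \<Rightarrow> nat list \<Rightarrow> nat list" where
  "morph_img \<sigma> w = concat (map \<sigma> w)"

lemma morph_img_simps [simp]:
  "morph_img \<sigma> [] = []"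
  "morph_img \<sigma> (a # w) = \<sigma> a @ morph_img \<sigma> w"
  "morph_img \<sigma> (u @ v) = morph_img \<sigma> u @ morph_img \<sigma> v"
  by (auto simp: morph_img_def)

lemma set_morph_img:
  assumes "is_morphism r \<sigma>" and "set w \<subseteq> {..<r}"
  shows "set (morph_img \<sigma> w) \<subseteq> {..<r}"
  using assms by (auto simp: morph_img_def is_morphism_def)

lemma length_morph_img_ge:
  "\<forall>a\<in>set w. 1 \<le> length (\<sigma> a) \<Longrightarrow> length w \<le> length (morph_img \<sigma> w)"
  by (induction w) auto

lemma length_morph_img_eq_sum_count:
  assumes "set w \<subseteq> {..<r}"
  shows "length (morph_img \<sigma> w) = (\<Sum>i<r. count_list w i * length (\<sigma> i))"
proof -
  have "length (morph_img \<sigma> w) = sum_list (map (\<lambda>a. length (\<sigma> a)) w)"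
    by (induction w) auto
  also have "\<dots> = (\<Sum>i<r. count_list w i * length (\<sigma> i))"
    using assms by (rule sum_list_map_eq_sum_count2) simp
  finally show ?thesis .
qed

lemma is_fixed_point_iff_prefixes:
  "is_fixed_point \<sigma> x \<longleftrightarrow>
     (\<forall>n. morph_img \<sigma> (map x [0..<n]) = map x [0..<length (morph_img \<sigma> (map x [0..<n]))])"
proof
  assume "is_fixed_point \<sigma> x"
  then show "\<forall>n. morph_img \<sigma> (map x [0..<n]) = map x [0..<length (morph_img \<sigma> (map x [0..<n]))]"
    unfolding is_fixed_point_def Let_def morph_img_def[symmetric] by (intro allI nth_equalityI) simp_all
next
  assume pre: "\<forall>n. morph_img \<sigma> (map x [0..<n]) = map x [0..<length (morph_img \<sigma> (map x [0..<n]))]"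
  show "is_fixed_point \<sigma> x"
    unfolding is_fixed_point_def Let_def morph_img_def[symmetric]
  proof (intro allI impI)
    fix n k assume "k < length (morph_img \<sigma> (map x [0..<n]))"
    then show "morph_img \<sigma> (map x [0..<n]) ! k = x k" by (subst pre[rule_format]) simp
  qed
qed

lemma prefix_of_map_upt:
  assumes "u @ v = map y [0..<m]"
  shows "u = map y [0..<length u]"
proof -
  have "length u \<le> m"
    using arg_cong[OF assms, of length] by simp
  have "u = take (length u) (map y [0..<m])"
    using assms by (metis append_eq_conv_conj)
  also have "\<dots> = map y [0..<length u]"
    using \<open>length u \<le> m\<close> by (simp add: take_map)
  finally show ?thesis .
qed

lemma map_upt_split:
  assumes "m \<le> n"
  shows "map x [0..<n] = map x [0..<m] @ map x [m..<n]"
  using upt_add_eq_append[OF le0, of m "n - m"] assms by simp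

lemma limit_word_prefixes:
  fixes F :: "nat list \<Rightarrow> nat list"
  assumes hom: "\<And>u v. F (u @ v) = F u @ F v"
    and long: "\<And>p. p < length (F (map x [0..<Suc p]))"
  shows "F (map x [0..<n]) = map (\<lambda>p. F (map x [0..<Suc p]) ! p) [0..<length (F (map x [0..<n]))]"
proof (rule nth_equalityI)
  fix p assume p: "p < length (F (map x [0..<n]))"
  have "F (map x [0..<n]) ! p = F (map x [0..<Suc p]) ! p"
  proof (cases "Suc p \<le> n")
    case True
    then show ?thesis
      using long[of p] by (simp add: map_upt_split[OF True] hom nth_append del: upt_Suc)
  next
    case False
    then have "n \<le> Suc p" by simp
    then show ?thesis
      using p by (simp add: map_upt_split[of n "Suc p"] hom nth_append del: upt_Suc)
  qed
  then show "F (map x [0..<n]) ! p = map (\<lambda>p. F (map x [0..<Suc p]) ! p) [0..<length (F (map x [0..<n]))] ! p"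
    using p by simp
qed simp

lemma is_fixed_point_limit_word:
  fixes F :: "nat list \<Rightarrow> nat list"
  assumes hom: "\<And>u v. F (u @ v) = F u @ F v"
    and long: "\<And>p. p < length (F (map x [0..<Suc p]))"
    and fp: "is_fixed_point \<sigma> x"
    and comm: "\<And>n. morph_img \<tau> (F (map x [0..<n])) = F (morph_img \<sigma> (map x [0..<n]))"
  shows "is_fixed_point \<tau> (\<lambda>p. F (map x [0..<Suc p]) ! p)"
  unfolding is_fixed_point_iff_prefixes
proof
  fix n
  define y where "y = (\<lambda>p. F (map x [0..<Suc p]) ! p)"
  have y_prefixes: "F (map x [0..<k]) = map y [0..<length (F (map x [0..<k]))]" for k
    unfolding y_def using hom long by (rule limit_word_prefixes)
  have "n \<le> length (F (map x [0..<n]))"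
    using Suc_leI[OF long] by (cases n) (auto simp del: upt_Suc)
  then have "map y [0..<n] = take n (F (map x [0..<n]))"
    by (subst y_prefixes) (simp add: take_map)
  then have "morph_img \<tau> (map y [0..<n]) @ morph_img \<tau> (drop n (F (map x [0..<n])))
      = morph_img \<tau> (F (map x [0..<n]))"
    by (metis append_take_drop_id morph_img_simps(3))
  also have "\<dots> = F (morph_img \<sigma> (map x [0..<n]))"
    by (rule comm)
  also have "\<dots> = F (map x [0..<length (morph_img \<sigma> (map x [0..<n]))])"
    using fp unfolding is_fixed_point_iff_prefixes by metis
  also have "\<dots> = map y [0..<length (F (map x [0..<length (morph_img \<sigma> (map x [0..<n]))]))]"
    by (rule y_prefixes)
  finally show "morph_img \<tau> (map y [0..<n]) = map y [0..<length (morph_img \<tau> (map y [0..<n]))]"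
    by (rule prefix_of_map_upt)
qed

section \<open>Length scaling\<close>

lemma length_morph_img_gt:
  assumes "is_morphism r \<sigma>" and "non_erasing r \<sigma>" and "a < r"
    and "hd (\<sigma> a) = a" and "2 \<le> length (\<sigma> a)"
  shows "length (\<sigma> a) < length (morph_img \<sigma> (\<sigma> a))"
proof -
  obtain t where t: "\<sigma> a = a # t" and "t \<noteq> []"
    using assms(4,5) by (cases "\<sigma> a") (auto simp: Suc_le_eq)
  have "set t \<subseteq> {..<r}"
    using assms(1,3) t unfolding is_morphism_def by (metis set_subset_Cons subset_trans)
  then have "length t \<le> length (morph_img \<sigma> t)"
    using assms(2) by (intro length_morph_img_ge) (auto simp: non_erasing_def)
  then show ?thesis
    using t \<open>t \<noteq> []\<close> by (cases t) auto
qed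

lemma left_eigvec_real_length_vec:
  assumes "left_eigvec_real (length_vec r \<sigma>) (incidence_mat r \<sigma>)"
  obtains c :: real where
    "\<And>j. j < r \<Longrightarrow> (\<Sum>i<r. real (count_list (\<sigma> j) i) * real (length (\<sigma> i))) = c * real (length (\<sigma> j))"
proof -
  obtain c :: real where ev: "transpose_mat (incidence_mat r \<sigma>) *\<^sub>v length_vec r \<sigma> = complex_of_real c \<cdot>\<^sub>v length_vec r \<sigma>"
    using assms unfolding left_eigvec_real_def by blast
  have "(\<Sum>i<r. real (count_list (\<sigma> j) i) * real (length (\<sigma> i))) = c * real (length (\<sigma> j))"
    if j: "j < r" for j
  proof -
    have "complex_of_real (\<Sum>i<r. real (count_list (\<sigma> j) i) * real (length (\<sigma> i)))
        = (transpose_mat (incidence_mat r \<sigma>) *\<^sub>v length_vec r \<sigma>) $ j"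
      using j by (auto simp: incidence_mat_def length_vec_def scalar_prod_def atLeast0LessThan
          intro!: sum.cong)
    also have "\<dots> = (complex_of_real c \<cdot>\<^sub>v length_vec r \<sigma>) $ j"
      by (simp only: ev)
    also have "\<dots> = complex_of_real (c * real (length (\<sigma> j)))"
      using j by (simp add: length_vec_def)
    finally show ?thesis by (simp only: of_real_eq_iff)
  qed
  then show ?thesis by (rule that)
qed

lemma length_funpow_morph_img:
  assumes "is_morphism r \<sigma>" and scal: "\<And>a. a < r \<Longrightarrow> real (length (morph_img \<sigma> (\<sigma> a))) = c * real (length (\<sigma> a))"
    and "set w \<subseteq> {..<r}"
  shows "real (length ((morph_img \<sigma> ^^ n) (morph_img \<sigma> w))) = c ^ n * real (length (morph_img \<sigma> w))"
  using assms(3)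
proof (induction n arbitrary: w)
  case (Suc n)
  have step: "real (length (morph_img \<sigma> (morph_img \<sigma> w))) = c * real (length (morph_img \<sigma> w))"
    using Suc.prems by (induction w) (auto simp: scal algebra_simps)
  have "real (length ((morph_img \<sigma> ^^ Suc n) (morph_img \<sigma> w)))
      = real (length ((morph_img \<sigma> ^^ n) (morph_img \<sigma> (morph_img \<sigma> w))))"
    by (simp only: funpow_Suc_right comp_apply)
  also have "\<dots> = c ^ n * real (length (morph_img \<sigma> (morph_img \<sigma> w)))"
    using Suc.IH set_morph_img[OF assms(1) Suc.prems] by blast
  finally show ?case
    by (simp add: step)
qed simp

lemma Ints_of_power_mult_Ints:
  fixes c :: real
  assumes "c \<in> \<rat>" and "m > 0" and "\<And>n. c ^ n * real m \<in> \<int>"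
  shows "c \<in> \<int>"
proof -
  obtain a b :: int where b: "b > 0" and "coprime a b" and c: "c = of_int a / of_int b"
    using Rats_cases'[OF assms(1)] by blast
  obtain k where "c ^ m * real m = of_int k"
    using assms(3) Ints_cases by metis
  then have "real_of_int (a ^ m * int m) = real_of_int (b ^ m * k)"
    using b by (simp add: c field_simps power_divide)
  then have "a ^ m * int m = b ^ m * k"
    by (simp only: of_int_eq_iff)
  then have "b ^ m dvd a ^ m * int m"
    by simp
  moreover have "coprime (b ^ m) (a ^ m)"
    using \<open>coprime a b\<close> by (simp add: coprime_commute)
  ultimately have "b ^ m dvd int m"
    using coprime_dvd_mult_right_iff by blast
  then have le: "b ^ m \<le> int m"
    using assms(2) by (intro zdvd_imp_le) auto
  have "b = 1"
  proof (rule ccontr)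
    assume "b \<noteq> 1"
    then have "(2::int) ^ m \<le> b ^ m"
      using b by (intro power_mono) auto
    moreover have "int m < 2 ^ m"
      using less_exp[of m] by (metis of_nat_less_iff of_nat_numeral of_nat_power)
    ultimately show False
      using le by simp
  qed
  then show ?thesis
    by (simp add: c)
qed

lemma length_scaling_factor_nat:
  assumes "is_morphism r \<sigma>" and "non_erasing r \<sigma>" and "r > 0"
    and scal: "\<And>a. a < r \<Longrightarrow> real (length (morph_img \<sigma> (\<sigma> a))) = c * real (length (\<sigma> a))"
  obtains q :: nat where "c = real q"
proof -
  define m where "m = length (\<sigma> 0)"
  have "m > 0"
    using assms(2,3) by (auto simp: non_erasing_def m_def)
  have c: "c = real (length (morph_img \<sigma> (\<sigma> 0))) / real m"
    using scal[OF assms(3)] \<open>m > 0\<close> unfolding m_def by (simp add: field_simps)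
  have "real (length ((morph_img \<sigma> ^^ n) (morph_img \<sigma> [0]))) = c ^ n * real (length (morph_img \<sigma> [0]))" for n
    using assms(3) by (intro length_funpow_morph_img[OF assms(1) scal]) auto
  then have pow: "c ^ n * real m \<in> \<int>" for n
    unfolding m_def by (metis Ints_of_nat append.right_neutral morph_img_simps(1,2))
  have "c \<in> \<rat>"
    unfolding c by simp
  then have "c \<in> \<int>"
    using \<open>m > 0\<close> pow by (rule Ints_of_power_mult_Ints)
  then obtain k :: int where k: "c = of_int k"
    by (rule Ints_cases)
  have "c \<ge> 0"
    unfolding c by simp
  then have "k \<ge> 0"
    using k by simp
  then show ?thesis
    using that[of "nat k"] k by simp
qed

lemma scaling_factor_ge_two:
  assumes morph: "is_morphism r \<sigma>" and ne: "non_erasing r \<sigma>"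
    and fp: "infinite_fixed_point r \<sigma> x"
    and len: "\<forall>a<r. length (morph_img \<sigma> (\<sigma> a)) = q * length (\<sigma> a)"
  shows "q \<ge> 2"
proof -
  have x0: "x 0 < r" and long: "2 \<le> length (\<sigma> (x 0))" and "is_fixed_point \<sigma> x"
    using fp by (auto simp: infinite_fixed_point_def)
  then have "\<forall>k<length (\<sigma> (x 0)). \<sigma> (x 0) ! k = x k"
    using spec[OF \<open>is_fixed_point \<sigma> x\<close>[unfolded is_fixed_point_def], of 1] by (simp add: Let_def)
  then have "hd (\<sigma> (x 0)) = x 0"
    using long by (cases "\<sigma> (x 0)") auto
  then have "length (\<sigma> (x 0)) < q * length (\<sigma> (x 0))"
    using length_morph_img_gt[OF morph ne x0 _ long] len x0 by simp
  then have "1 < q"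
    using mult_less_cancel2[of 1 "length (\<sigma> (x 0))" q] by simp
  then show ?thesis
    by simp
qed

section \<open>Automaticity via marked letters\<close>

text \<open>The marked image replaces the \<open>i\<close>-th letter of each block \<open>\<sigma>(a)\<close> by the code
  \<open>a * K + i\<close> of the pair \<open>(a, i)\<close>; the codes are injective as long as \<open>K\<close> bounds all image lengths.\<close>

definition marked_img :: "(nat \<Rightarrow> nat list) \<Rightarrow> nat \<Rightarrow> nat list \<Rightarrow> nat list" where
  "marked_img \<sigma> K w = concat (map (\<lambda>a. map (\<lambda>i. a * K + i) [0..<length (\<sigma> a)]) w)"

lemma marked_img_simps [simp]:
  "marked_img \<sigma> K [] = []"
  "marked_img \<sigma> K (a # w) = map (\<lambda>i. a * K + i) [0..<length (\<sigma> a)] @ marked_img \<sigma> K w"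
  "marked_img \<sigma> K (u @ v) = marked_img \<sigma> K u @ marked_img \<sigma> K v"
  by (auto simp: marked_img_def)

lemma length_marked_img [simp]: "length (marked_img \<sigma> K w) = length (morph_img \<sigma> w)"
  by (induction w) auto

lemma map_decode_marked_img:
  assumes "\<forall>a\<in>set w. length (\<sigma> a) \<le> K"
  shows "map (\<lambda>c. \<sigma> (c div K) ! (c mod K)) (marked_img \<sigma> K w) = morph_img \<sigma> w"
  using assms
proof (induction w)
  case (Cons a w)
  have "map (\<lambda>c. \<sigma> (c div K) ! (c mod K)) (map (\<lambda>i. a * K + i) [0..<length (\<sigma> a)]) = \<sigma> a"
    using Cons.prems by (intro nth_equalityI) auto
  then show ?case
    using Cons by simp
qed simp

lemma set_marked_img:
  assumes "set w \<subseteq> {..<r}" and "\<forall>a<r. length (\<sigma> a) \<le> K"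
  shows "set (marked_img \<sigma> K w) \<subseteq> {..<r * K}"
  using assms(1)
proof (induction w)
  case (Cons a w)
  have "a < r"
    using Cons.prems by simp
  then have "a * K + length (\<sigma> a) \<le> Suc a * K"
    using assms(2) by simp
  also have "\<dots> \<le> r * K"
    using \<open>a < r\<close> by (intro mult_le_mono1) simp
  finally show ?case
    using Cons by auto
qed simp

lemma concat_blocks:
  assumes "length xs = k * q"
  shows "concat (map (\<lambda>i. take q (drop (i * q) xs)) [0..<k]) = xs"
proof -
  have "concat (map (\<lambda>i. take q (drop (i * q) xs)) [0..<k']) = take (k' * q) xs" for k'
  proof (induction k')
    case (Suc k')
    have "take (Suc k' * q) xs = take (k' * q) xs @ take q (drop (k' * q) xs)"
      using take_add[of "k' * q" q xs] by (simp add: add.commute)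
    then show ?case
      using Suc by simp
  qed simp
  then show ?thesis
    using assms by simp
qed

text \<open>The code of \<open>(a, i)\<close> is sent to the \<open>i\<close>-th block of length \<open>q\<close> of the marked image of
  \<open>\<sigma>(a)\<close>; when \<open>|\<sigma>(\<sigma>(a))| = q |\<sigma>(a)|\<close> these blocks partition it. Codes of no pair are
  never reached and go to an arbitrary word of length \<open>q\<close>.\<close>

definition lifted_morph :: "nat \<Rightarrow> (nat \<Rightarrow> nat list) \<Rightarrow> nat \<Rightarrow> nat \<Rightarrow> nat \<Rightarrow> nat list" where
  "lifted_morph r \<sigma> K q c =
     (if c div K < r \<and> c mod K < length (\<sigma> (c div K))
      then take q (drop (c mod K * q) (marked_img \<sigma> K (\<sigma> (c div K))))
      else replicate q 0)"

lemma uniform_lifted_morph: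
  assumes "\<forall>a<r. length (morph_img \<sigma> (\<sigma> a)) = q * length (\<sigma> a)"
  shows "uniform s q (lifted_morph r \<sigma> K q)"
  unfolding uniform_def
proof (intro allI impI)
  fix c
  show "length (lifted_morph r \<sigma> K q c) = q"
  proof (cases "c div K < r \<and> c mod K < length (\<sigma> (c div K))")
    case True
    then have "q + c mod K * q \<le> q * length (\<sigma> (c div K))"
      using mult_le_mono2[of "Suc (c mod K)" "length (\<sigma> (c div K))" q] by (simp add: algebra_simps)
    moreover have "length (marked_img \<sigma> K (\<sigma> (c div K))) = q * length (\<sigma> (c div K))"
      using True assms by simp
    ultimately show ?thesis
      using True by (simp add: lifted_morph_def)
  qed (auto simp: lifted_morph_def)
qed

lemma is_morphism_lifted_morph:
  assumes "is_morphism r \<sigma>" and "\<forall>a<r. length (\<sigma> a) \<le> K"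
  shows "is_morphism (r * K) (lifted_morph r \<sigma> K q)"
  unfolding is_morphism_def
proof (intro allI impI)
  fix c assume "c < r * K"
  show "set (lifted_morph r \<sigma> K q c) \<subseteq> {..<r * K}"
  proof (cases "c div K < r \<and> c mod K < length (\<sigma> (c div K))")
    case True
    then have "set (marked_img \<sigma> K (\<sigma> (c div K))) \<subseteq> {..<r * K}"
      using assms by (intro set_marked_img) (auto simp: is_morphism_def)
    then show ?thesis
      using True by (auto simp: lifted_morph_def dest: in_set_takeD in_set_dropD)
  next
    case False
    have "0 < r * K"
      using \<open>c < r * K\<close> by linarith
    then show ?thesis
      using False by (auto simp: lifted_morph_def simp del: nat_0_less_mult_iff)
  qed
qed

lemma morph_img_lifted_morph_marked_img:
  assumes lenK: "\<forall>a<r. length (\<sigma> a) \<le> K"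
    and len: "\<forall>a<r. length (morph_img \<sigma> (\<sigma> a)) = q * length (\<sigma> a)"
    and "set w \<subseteq> {..<r}"
  shows "morph_img (lifted_morph r \<sigma> K q) (marked_img \<sigma> K w) = marked_img \<sigma> K (morph_img \<sigma> w)"
  using assms(3)
proof (induction w)
  case (Cons a w)
  have a: "a < r"
    using Cons.prems by simp
  have "map (lifted_morph r \<sigma> K q) (map (\<lambda>i. a * K + i) [0..<length (\<sigma> a)])
      = map (\<lambda>i. take q (drop (i * q) (marked_img \<sigma> K (\<sigma> a)))) [0..<length (\<sigma> a)]"
    unfolding map_map
  proof (rule map_cong[OF refl])
    fix i assume "i \<in> set [0..<length (\<sigma> a)]"
    then have "i < length (\<sigma> a)" "i < K"
      using lenK a by fastforce+
    then show "(lifted_morph r \<sigma> K q \<circ> (\<lambda>i. a * K + i)) i = take q (drop (i * q) (marked_img \<sigma> K (\<sigma> a)))"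
      using a by (simp add: lifted_morph_def)
  qed
  moreover have "length (marked_img \<sigma> K (\<sigma> a)) = length (\<sigma> a) * q"
    using len a by simp
  ultimately have "morph_img (lifted_morph r \<sigma> K q) (map (\<lambda>i. a * K + i) [0..<length (\<sigma> a)])
      = marked_img \<sigma> K (\<sigma> a)"
    unfolding morph_img_def by (simp only: concat_blocks)
  then show ?case
    using Cons by simp
qed simp

lemma automatic_of_length_scaling:
  assumes morph: "is_morphism r \<sigma>" and ne: "non_erasing r \<sigma>" and alph: "\<forall>n. x n < r"
    and fp: "is_fixed_point \<sigma> x" and "q \<ge> 2"
    and len: "\<forall>a<r. length (morph_img \<sigma> (\<sigma> a)) = q * length (\<sigma> a)"
  shows "automatic q x"
proof -
  define K where "K = (\<Sum>a<r. length (\<sigma> a))"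
  have lenK: "\<forall>a<r. length (\<sigma> a) \<le> K"
    unfolding K_def by (auto intro: member_le_sum)
  define y where "y = (\<lambda>p. marked_img \<sigma> K (map x [0..<Suc p]) ! p)"
  define f where "f = (\<lambda>c. \<sigma> (c div K) ! (c mod K))"
  have prefix_alph: "set (map x [0..<n]) \<subseteq> {..<r}" for n
    using alph by auto
  have long: "p < length (marked_img \<sigma> K (map x [0..<Suc p]))" for p
    using length_morph_img_ge[of "map x [0..<Suc p]" \<sigma>] prefix_alph[of "Suc p"] ne
    by (fastforce simp: non_erasing_def simp del: upt_Suc)
  have "is_fixed_point (lifted_morph r \<sigma> K q) y"
    unfolding y_def
    using marked_img_simps(3) long fp
      morph_img_lifted_morph_marked_img[OF lenK len prefix_alph]
    by (rule is_fixed_point_limit_word)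
  moreover have "y n < r * K" for n
    using set_marked_img[OF prefix_alph lenK] nth_mem[OF long] unfolding y_def by blast
  moreover have "x n = f (y n)" for n
  proof -
    have "map f (marked_img \<sigma> K (map x [0..<Suc n])) = morph_img \<sigma> (map x [0..<Suc n])"
      unfolding f_def using lenK prefix_alph[of "Suc n"] by (intro map_decode_marked_img) auto
    also have "\<dots> = map x [0..<length (morph_img \<sigma> (map x [0..<Suc n]))]"
      using fp unfolding is_fixed_point_iff_prefixes by metis
    finally have decode: "map f (marked_img \<sigma> K (map x [0..<Suc n]))
        = map x [0..<length (morph_img \<sigma> (map x [0..<Suc n]))]" .
    have "f (y n) = map f (marked_img \<sigma> K (map x [0..<Suc n])) ! n"
      using long[of n] unfolding y_def by (simp del: upt_Suc)
    also have "\<dots> = x n"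
      using long[of n] by (simp only: decode) (simp del: upt_Suc)
    finally show ?thesis ..
  qed
  ultimately have "is_morphism (r * K) (lifted_morph r \<sigma> K q) \<and> uniform (r * K) q (lifted_morph r \<sigma> K q)
      \<and> (\<forall>n. y n < r * K) \<and> is_fixed_point (lifted_morph r \<sigma> K q) y \<and> (\<forall>n. x n = f (y n))"
    using is_morphism_lifted_morph[OF morph lenK] uniform_lifted_morph[OF len] by blast
  then show ?thesis
    unfolding automatic_def using \<open>q \<ge> 2\<close> by blast
qed

section \<open>Spectral radius\<close>

lemma norm_eigenvalue_le_positive_left_eigvec:
  fixes A :: "nat \<Rightarrow> nat \<Rightarrow> real" and w :: "nat \<Rightarrow> real"
  assumes nonneg: "\<And>i j. i < n \<Longrightarrow> j < n \<Longrightarrow> 0 \<le> A i j"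
    and pos: "\<And>i. i < n \<Longrightarrow> 0 < w i"
    and left: "\<And>j. j < n \<Longrightarrow> (\<Sum>i<n. A i j * w i) = \<rho> * w j"
    and "eigenvalue (mat n n (\<lambda>(i, j). complex_of_real (A i j))) e"
  shows "norm e \<le> \<rho>"
proof -
  obtain v where v: "eigenvector (mat n n (\<lambda>(i, j). complex_of_real (A i j))) v e"
    using assms(4) unfolding eigenvalue_def by blast
  then have vc: "v \<in> carrier_vec n" and "v \<noteq> 0\<^sub>v n"
    and Mv: "mat n n (\<lambda>(i, j). complex_of_real (A i j)) *\<^sub>v v = e \<cdot>\<^sub>v v"
    unfolding eigenvector_def by auto
  have row: "norm e * norm (v $ i) \<le> (\<Sum>j<n. A i j * norm (v $ j))" if "i < n" for i
  proof -
    have "e * v $ i = (\<Sum>j<n. complex_of_real (A i j) * v $ j)"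
      using arg_cong[OF Mv, of "\<lambda>u. u $ i"] that vc
      by (simp add: scalar_prod_def atLeast0LessThan)
    then have "norm e * norm (v $ i) = norm (\<Sum>j<n. complex_of_real (A i j) * v $ j)"
      by (metis norm_mult)
    also have "\<dots> \<le> (\<Sum>j<n. norm (complex_of_real (A i j) * v $ j))"
      by (rule norm_sum)
    also have "\<dots> = (\<Sum>j<n. A i j * norm (v $ j))"
      using nonneg that by (intro sum.cong) (simp_all add: norm_mult)
    finally show ?thesis .
  qed
  define T where "T = (\<Sum>i<n. w i * norm (v $ i))"
  have "norm e * T = (\<Sum>i<n. w i * (norm e * norm (v $ i)))"
    unfolding T_def by (simp add: sum_distrib_left algebra_simps)
  also have "\<dots> \<le> (\<Sum>i<n. w i * (\<Sum>j<n. A i j * norm (v $ j)))"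
    using pos row by (intro sum_mono mult_left_mono) (auto intro: less_imp_le)
  also have "\<dots> = (\<Sum>i<n. \<Sum>j<n. w i * (A i j * norm (v $ j)))"
    by (simp add: sum_distrib_left)
  also have "\<dots> = (\<Sum>j<n. \<Sum>i<n. w i * (A i j * norm (v $ j)))"
    by (rule sum.swap)
  also have "\<dots> = (\<Sum>j<n. (\<Sum>i<n. A i j * w i) * norm (v $ j))"
    by (simp add: sum_distrib_left mult_ac)
  also have "\<dots> = (\<Sum>j<n. \<rho> * (w j * norm (v $ j)))"
    by (intro sum.cong) (simp_all add: left)
  also have "\<dots> = \<rho> * T"
    unfolding T_def by (simp add: sum_distrib_left)
  finally have "norm e * T \<le> \<rho> * T" .
  moreover have "T > 0"
  proof -
    obtain i where "i < n" "v $ i \<noteq> 0"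
      using \<open>v \<noteq> 0\<^sub>v n\<close> vc by (metis eq_vecI carrier_vecD index_zero_vec)
    then have "0 < w i * norm (v $ i)"
      using pos by simp
    also have "\<dots> \<le> T"
      unfolding T_def using \<open>i < n\<close>
      by (intro member_le_sum) (auto intro!: mult_nonneg_nonneg pos[THEN less_imp_le])
    finally show ?thesis .
  qed
  ultimately show ?thesis
    by simp
qed

lemma spectral_radius_eq_positive_left_eigvec:
  fixes A :: "nat \<Rightarrow> nat \<Rightarrow> real" and w :: "nat \<Rightarrow> real"
  assumes "n > 0"
    and nonneg: "\<And>i j. i < n \<Longrightarrow> j < n \<Longrightarrow> 0 \<le> A i j"
    and pos: "\<And>i. i < n \<Longrightarrow> 0 < w i"
    and left: "\<And>j. j < n \<Longrightarrow> (\<Sum>i<n. A i j * w i) = \<rho> * w j"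
  shows "spectral_radius (mat n n (\<lambda>(i, j). complex_of_real (A i j))) = \<rho>"
proof -
  define M where "M = mat n n (\<lambda>(i, j). complex_of_real (A i j))"
  have M: "M \<in> carrier_mat n n"
    by (simp add: M_def)
  define W where "W = vec n (\<lambda>i. complex_of_real (w i))"
  have "transpose_mat M *\<^sub>v W = complex_of_real \<rho> \<cdot>\<^sub>v W"
  proof (rule eq_vecI)
    fix j assume "j < dim_vec (complex_of_real \<rho> \<cdot>\<^sub>v W)"
    then have "j < n" by (simp add: W_def)
    then have "(transpose_mat M *\<^sub>v W) $ j = complex_of_real (\<Sum>i<n. A i j * w i)"
      by (simp add: M_def W_def scalar_prod_def atLeast0LessThan)
    then show "(transpose_mat M *\<^sub>v W) $ j = (complex_of_real \<rho> \<cdot>\<^sub>v W) $ j"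
      using \<open>j < n\<close> by (simp add: left W_def)
  qed (simp add: M_def W_def)
  moreover have "W \<noteq> 0\<^sub>v n"
    using pos[OF \<open>n > 0\<close>] \<open>n > 0\<close> by (auto simp: W_def dest: arg_cong[of _ _ "\<lambda>u. u $ 0"])
  ultimately have "eigenvalue (transpose_mat M) (complex_of_real \<rho>)"
    unfolding eigenvalue_def eigenvector_def using M by (intro exI[of _ W]) (simp add: W_def)
  then have "eigenvalue M (complex_of_real \<rho>)"
    using M by (simp add: eigenvalue_root_char_poly[of _ n])
  then have "norm (complex_of_real \<rho>) \<in> norm ` spectrum M"
    unfolding spectrum_def by (intro imageI) simp
  then have "\<bar>\<rho>\<bar> \<le> spectral_radius M"
    using spectral_radius_mem_max(2)[OF M \<open>n > 0\<close>] by simp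
  moreover have "spectral_radius M \<le> \<rho>"
    using spectral_radius_mem_max(1)[OF M \<open>n > 0\<close>]
      norm_eigenvalue_le_positive_left_eigvec[OF nonneg pos left]
    by (auto simp: spectrum_def M_def)
  ultimately show ?thesis
    unfolding M_def by linarith
qed

lemma spectral_radius_incidence_mat:
  assumes "r > 0" and "non_erasing r \<sigma>"
    and "\<And>j. j < r \<Longrightarrow> (\<Sum>i<r. real (count_list (\<sigma> j) i) * real (length (\<sigma> i))) = \<rho> * real (length (\<sigma> j))"
  shows "spectral_radius (incidence_mat r \<sigma>) = \<rho>"
proof -
  have "0 < real (length (\<sigma> i))" if "i < r" for i
    using assms(2) that by (auto simp: non_erasing_def)
  then show ?thesis
    using spectral_radius_eq_positive_left_eigvec[OF assms(1), of "\<lambda>i j. real (count_list (\<sigma> j) i)"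
        "\<lambda>i. real (length (\<sigma> i))" \<rho>] assms(3)
    by (simp add: incidence_mat_def)
qed

theorem theorem1:
  fixes r :: nat and \<sigma> :: "nat \<Rightarrow> nat list" and x :: "nat \<Rightarrow> nat"
  assumes "r > 1"
    and "is_morphism r \<sigma>"
    and "non_erasing r \<sigma>"
    and "infinite_fixed_point r \<sigma> x"
    and "left_eigvec_real (length_vec r \<sigma>) (incidence_mat r \<sigma>)"
  shows "\<exists>q::nat. spectral_radius (incidence_mat r \<sigma>) = real q \<and> automatic q x"
proof -
  have "r > 0"
    using assms(1) by simp
  obtain c where left: "\<And>j. j < r \<Longrightarrow>
      (\<Sum>i<r. real (count_list (\<sigma> j) i) * real (length (\<sigma> i))) = c * real (length (\<sigma> j))"
    using left_eigvec_real_length_vec[OF assms(5)] by blast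
  have scal: "real (length (morph_img \<sigma> (\<sigma> a))) = c * real (length (\<sigma> a))" if "a < r" for a
    using length_morph_img_eq_sum_count[of "\<sigma> a" r \<sigma>] assms(2) left[OF that] that
    by (simp add: is_morphism_def)
  obtain q :: nat where q: "c = real q"
    using assms(2,3) \<open>r > 0\<close> scal by (rule length_scaling_factor_nat)
  have len: "\<forall>a<r. length (morph_img \<sigma> (\<sigma> a)) = q * length (\<sigma> a)"
    using scal unfolding q by (metis of_nat_eq_iff of_nat_mult)
  have "automatic q x"
    using assms(2,3,4) len scaling_factor_ge_two[OF assms(2,3,4) len]
    by (intro automatic_of_length_scaling) (auto simp: infinite_fixed_point_def)
  moreover have "spectral_radius (incidence_mat r \<sigma>) = real q"
    using \<open>r > 0\<close> assms(3) left unfolding q by (rule spectral_radius_incidence_mat)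
  ultimately show ?thesis
    by blast
qed

end
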